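(* Let $\Gamma$ be a finite metric tree with edges $e_1,\dots,e_E$ having propagation times $t_1,\dots,t_E$ that are linearly independent over $\mathbb{Q}$, and let $A$ be a vertex of $\Gamma$ of valence $n=\deg(A)$. Then for every $T\ge 0$, $$N(\Gamma, A,A,T) = \sum_{G\subseteq E(\Gamma)} c_G\, \#[G],$$ where the coefficient $c_G$ is defined as follows. Number the edges incident to $A$ as $e_1,\dots,e_n$ so that $G$ meets $E(\Gamma_{e_1}),\dots,E(\Gamma_{e_k})$ and is disjoint from $E(\Gamma_{e_{k+1}}),\dots,E(\Gamma_{e_n})$ (with $0\le k\le n$). Then $$ c_G = \prod_{i=1}^k z\big(\Gamma_{e_i}, G\cap E(\Gamma_{e_i}), A\big) \left[ \sum_{j=0}^{n-k-1} (n-k-j)\, \sigma_j(z_{k+1},\dots,z_n) \right],$$ where $z_i=z_i(\Gamma,A)$ and $\sigma_j$ is the $j$-th elementary symmetric polynomial ($\sigma_0=1$).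
   Context: Dynamics on a finite metric tree $\Gamma$: each edge $e_i$ is traversed by a moving point in the fixed time $t_i>0$ (no turning points on edges). At time $0$ the process starts at the vertex $A$ (a point at $A$ departs, one point along each edge incident to $A$). At a vertex of valence one a point is reflected. If $k$ points arrive simultaneously at an interior vertex of valence $v$, then $v$ points leave it, one along each incident edge; the number of new points born at that vertex at that moment is $v-k$. $N(\Gamma,A,X,T)$ denotes the total number of new points born at the vertex $X$ up to the moment $T$, when the process starts at $A$ at time $0$. Notation: $E(\Gamma)$ is the edge set and $|\Gamma|=|E(\Gamma)|$. For a vertex $A$ with incident edges $e_1,\dots,e_n$, $\Gamma_{e_i}$ is the maximal subtree of $\Gamma$ containing $e_i$ and none of the edges $e_j$, $j\neq i$ (the branch of $\Gamma$ at $A$ through $e_i$); thus $\Gamma=\bigcup_i\Gamma_{e_i}$. For a tree $\Gamma$ with a vertex $A$ and an edge set $G\subseteq E(\Gamma)$, $$z(\Gamma,G,A)=(-1)^{|G|}\sum_{\Gamma'}(-1)^{|\Gamma'|},$$ the sum being over all subtrees (connected subgraphs) $\Gamma'\subseteq\Gamma$ containing $A$ and having at least one edge, with $G\subseteq E(\Gamma')$. Also $z_i(\Gamma,A)=z(\Gamma_{e_i},\varnothing,A)$ for $1\le i\le \deg(A)$. For $G=\{e_{i_1},\dots,e_{i_m}\}$, $\#[G]$ is the number of tuples of nonnegative integers $(n_{i_1},\dots,n_{i_m})$ with $2n_{i_1}t_{i_1}+\dots+2n_{i_m}t_{i_m}\le T$; $\#[\varnothing]=1$. *)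

theory Defs
  imports Complex_Main "HOL-Library.FuncSet"
begin

definition adj :: "'v set set \<Rightarrow> ('v \<times> 'v) set" where
  "adj F = {(u, w). {u, w} \<in> F}"

definition connected_graph :: "'v set \<Rightarrow> 'v set set \<Rightarrow> bool" where
  "connected_graph Vs F \<longleftrightarrow> (\<forall>u\<in>Vs. \<forall>w\<in>Vs. (u, w) \<in> (adj F)\<^sup>*)"

definition is_tree :: "'v set \<Rightarrow> 'v set set \<Rightarrow> bool" where
  "is_tree V E \<longleftrightarrow> finite V \<and> V \<noteq> {} \<and>
     (\<forall>e\<in>E. \<exists>u w. e = {u, w} \<and> u \<noteq> w \<and> u \<in> V \<and> w \<in> V) \<and>
     connected_graph V E \<and> (\<forall>e\<in>E. \<not> connected_graph V (E - {e}))"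

definition incident :: "'v set set \<Rightarrow> 'v \<Rightarrow> 'v set set" where
  "incident E A = {e \<in> E. A \<in> e}"

definition subtrees_at :: "'v set set \<Rightarrow> 'v \<Rightarrow> 'v set set set" where
  "subtrees_at H A = {F. F \<subseteq> H \<and> F \<noteq> {} \<and> A \<in> \<Union>F \<and> connected_graph (\<Union>F) F}"

text \<open>Branch Gamma_e at A through the incident edge e: the maximal subtree
  containing e and no other edge incident to A.\<close>
definition branch :: "'v set set \<Rightarrow> 'v \<Rightarrow> 'v set \<Rightarrow> 'v set set" where
  "branch E A e = \<Union>{F. F \<subseteq> E \<and> e \<in> F \<and> connected_graph (\<Union>F) F \<and>
                        (\<forall>f\<in>F. A \<in> f \<longrightarrow> f = e)}"

definition zz :: "'v set set \<Rightarrow> 'v set set \<Rightarrow> 'v \<Rightarrow> int" where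
  "zz H G A = (-1) ^ card G * (\<Sum>F\<in>{F \<in> subtrees_at H A. G \<subseteq> F}. (-1) ^ card F)"

definition esym :: "nat \<Rightarrow> ('e \<Rightarrow> int) \<Rightarrow> 'e set \<Rightarrow> int" where
  "esym j f R = (\<Sum>S\<in>{S. S \<subseteq> R \<and> card S = j}. \<Prod>e\<in>S. f e)"

definition coeff :: "'v set set \<Rightarrow> 'v \<Rightarrow> 'v set set \<Rightarrow> int" where
  "coeff E A G =
    (let I = incident E A;
         K = {e \<in> I. G \<inter> branch E A e \<noteq> {}};
         R = I - K;
         n = card I; k = card K
     in (\<Prod>e\<in>K. zz (branch E A e) (G \<inter> branch E A e) A) *
        (\<Sum>j\<in>{0..<n - k}. int (n - k - j) * esym j (\<lambda>e. zz (branch E A e) {} A) R))"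

definition lattice_count :: "('v set \<Rightarrow> real) \<Rightarrow> 'v set set \<Rightarrow> real \<Rightarrow> nat" where
  "lattice_count t G T =
     card {f \<in> G \<rightarrow>\<^sub>E (UNIV :: nat set). (\<Sum>e\<in>G. 2 * real (f e) * t e) \<le> T}"

definition lin_indep_Q :: "'v set set \<Rightarrow> ('v set \<Rightarrow> real) \<Rightarrow> bool" where
  "lin_indep_Q E t \<longleftrightarrow>
     (\<forall>q :: 'v set \<Rightarrow> rat. (\<Sum>e\<in>E. of_rat (q e) * t e) = 0 \<longrightarrow> (\<forall>e\<in>E. q e = 0))"

text \<open>(u, w, s) in deps: a point departs from vertex u along edge {u,w} (towards w)
  at time s. Initially a point departs from A along each incident edge; whenever
  points arrive at a vertex w at time s, one point leaves w along each incident edge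
  (at a leaf this is reflection).\<close>
inductive_set deps :: "'v set set \<Rightarrow> ('v set \<Rightarrow> real) \<Rightarrow> 'v \<Rightarrow> ('v \<times> 'v \<times> real) set"
  for E t A where
  start: "{A, w} \<in> E \<Longrightarrow> (A, w, 0) \<in> deps E t A"
| step: "(u, w, s) \<in> deps E t A \<Longrightarrow> {w, x} \<in> E \<Longrightarrow> (w, x, s + t {u, w}) \<in> deps E t A"

definition arrivals :: "'v set set \<Rightarrow> ('v set \<Rightarrow> real) \<Rightarrow> 'v \<Rightarrow> 'v \<Rightarrow> real \<Rightarrow> nat" where
  "arrivals E t A X s = card {u. (u, X, s - t {u, X}) \<in> deps E t A}"

definition dep_times :: "'v set set \<Rightarrow> ('v set \<Rightarrow> real) \<Rightarrow> 'v \<Rightarrow> 'v \<Rightarrow> real set" where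
  "dep_times E t A X = {s. \<exists>w. (X, w, s) \<in> deps E t A}"

text \<open>N(Gamma, A, X, T): new points born at X (valence minus number of arrivals,
  at each moment points leave X) up to and including time T.\<close>
definition NN :: "'v set set \<Rightarrow> ('v set \<Rightarrow> real) \<Rightarrow> 'v \<Rightarrow> 'v \<Rightarrow> real \<Rightarrow> int" where
  "NN E t A X T = (\<Sum>s\<in>{s \<in> dep_times E t A X. s \<le> T}.
      int (card (incident E X)) - int (arrivals E t A X s))"

end

theory Submission
  imports Defs
begin

text \<open>A point leaving a vertex u at time s has reached u along a walk from A, and since the
  times t e are linearly independent over the rationals, s determines how often that walk
  traversed each edge. In a tree these edge counts c are characterised by two conditions:
  c e is odd exactly when e separates u from A, and the traversed edges form a subtree
  containing A and u. Hence points leave A at the moments sum_e 2 m e t e, where the support H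
  of m is empty or a subtree through A, and at such a moment deg A - |H \<inter> E(A)| points are
  born. Sorting the lattice points m by their supports writes N as sum_G c_G #[G], where c_G
  is the Moebius transform of these birth numbers on the Boolean lattice of edge sets. The
  transform factorises over the branches at A, because a subtree through A is the disjoint
  union of its traces on the branches.\<close>

lemma sym_adj: "sym (adj F)"
  by (auto simp: sym_def adj_def insert_commute)

lemma rtrancl_adj_sym: "(a, b) \<in> (adj F)\<^sup>* \<Longrightarrow> (b, a) \<in> (adj F)\<^sup>*"
  by (rule symD[OF sym_rtrancl[OF sym_adj]])

lemma rtrancl_adj_mono:
  assumes "F \<subseteq> F'" "(a, b) \<in> (adj F)\<^sup>*"
  shows "(a, b) \<in> (adj F')\<^sup>*"
proof -
  have "adj F \<subseteq> adj F'" using assms(1) by (auto simp: adj_def)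
  then show ?thesis using assms(2) rtrancl_mono by blast
qed

lemma edge_in_rtrancl_adj: "{a, b} \<in> F \<Longrightarrow> (a, b) \<in> (adj F)\<^sup>*"
  by (auto simp: adj_def)

lemma rtrancl_adj_in_Union: "(a, b) \<in> (adj F)\<^sup>* \<Longrightarrow> a \<noteq> b \<Longrightarrow> a \<in> \<Union>F \<and> b \<in> \<Union>F"
proof (induction rule: rtrancl_induct)
  case (step y z)
  then show ?case by (cases "a = y") (auto simp: adj_def)
qed simp

lemma connected_graphI:
  assumes "a \<in> Vs" "\<And>x. x \<in> Vs \<Longrightarrow> (a, x) \<in> (adj F)\<^sup>*"
  shows "connected_graph Vs F"
  unfolding connected_graph_def using assms rtrancl_adj_sym by (meson rtrancl_trans)

lemma rtrancl_adj_Diff_edge: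
  assumes "(a, x) \<in> (adj F)\<^sup>*"
  shows "(a, x) \<in> (adj (F - {{p, q}}))\<^sup>* \<or> (a, p) \<in> (adj (F - {{p, q}}))\<^sup>* \<or>
    (a, q) \<in> (adj (F - {{p, q}}))\<^sup>*"
  using assms
proof (induction rule: rtrancl_induct)
  case (step y z)
  show ?case
  proof (cases "{y, z} = {p, q}")
    case True
    then have "z = p \<or> z = q" "y = p \<or> y = q" by (auto simp: doubleton_eq_iff)
    then show ?thesis using step.IH by auto
  next
    case False
    then have "(y, z) \<in> adj (F - {{p, q}})" using step.hyps(2) by (auto simp: adj_def)
    then show ?thesis using step.IH by (meson rtrancl_into_rtrancl)
  qed
qed simp

lemma rtrancl_adj_Diff_pendant_edge:
  assumes "u \<noteq> y" and pendant: "\<forall>g\<in>F. u \<in> g \<longrightarrow> g = {u, y}"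
    and "(a, b) \<in> (adj F)\<^sup>*" and "a \<noteq> u"
  shows "(a, if b = u then y else b) \<in> (adj (F - {{u, y}}))\<^sup>*"
  using assms(3)
proof (induction rule: rtrancl_induct)
  case base
  then show ?case using \<open>a \<noteq> u\<close> by simp
next
  case (step b b')
  have e: "{b, b'} \<in> F" using step.hyps(2) by (simp add: adj_def)
  consider "b = u" | "b' = u" | "b \<noteq> u" "b' \<noteq> u" by blast
  then show ?case
  proof cases
    case 1
    then have "{b, b'} = {u, y}" using pendant[rule_format, OF e] by simp
    then have "b' = y" using 1 \<open>u \<noteq> y\<close> by (simp add: doubleton_eq_iff)
    then show ?thesis using step.IH 1 \<open>u \<noteq> y\<close> by simp
  next
    case 2
    then have "{b, b'} = {u, y}" using pendant[rule_format, OF e] by simp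
    then have "b = y" using 2 \<open>u \<noteq> y\<close> by (simp add: doubleton_eq_iff)
    then show ?thesis using step.IH 2 \<open>u \<noteq> y\<close> by simp
  next
    case 3
    have "(a, b) \<in> (adj (F - {{u, y}}))\<^sup>*" using step.IH 3 by simp
    moreover have "(b, b') \<in> adj (F - {{u, y}})"
      using e 3 by (auto simp: adj_def doubleton_eq_iff)
    ultimately show ?thesis using 3 by simp
  qed
qed

lemma connected_graph_insert_edge:
  assumes "connected_graph (\<Union>F) F" "x \<in> \<Union>F"
  shows "connected_graph (\<Union>(insert {x, y} F)) (insert {x, y} F)"
proof (rule connected_graphI[of x])
  fix z assume "z \<in> \<Union>(insert {x, y} F)"
  then consider "z = x" | "z = y" | "z \<in> \<Union>F" by auto
  then show "(x, z) \<in> (adj (insert {x, y} F))\<^sup>*"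
  proof cases
    case 2
    then show ?thesis by (intro edge_in_rtrancl_adj) simp
  next
    case 3
    then have "(x, z) \<in> (adj F)\<^sup>*" using assms by (auto simp: connected_graph_def)
    then show ?thesis by (rule rtrancl_adj_mono[rotated]) auto
  qed simp
qed simp

lemma connected_graph_Diff_pendant_edge:
  assumes conn: "connected_graph (\<Union>F) F" and "{u, y} \<in> F" "u \<noteq> y"
    and pendant: "\<forall>g\<in>F. u \<in> g \<longrightarrow> g = {u, y}" and "F \<noteq> {{u, y}}" and "{} \<notin> F"
  shows "\<Union>(F - {{u, y}}) = \<Union>F - {u}" "connected_graph (\<Union>(F - {{u, y}})) (F - {{u, y}})"
proof -
  have path: "(a, b) \<in> (adj (F - {{u, y}}))\<^sup>*"
    if "a \<in> \<Union>F" "b \<in> \<Union>F" "a \<noteq> u" "b \<noteq> u" for a b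
  proof -
    have "(a, b) \<in> (adj F)\<^sup>*" using conn that(1,2) unfolding connected_graph_def by blast
    from rtrancl_adj_Diff_pendant_edge[OF \<open>u \<noteq> y\<close> pendant this \<open>a \<noteq> u\<close>]
    show ?thesis using \<open>b \<noteq> u\<close> by simp
  qed
  show verts: "\<Union>(F - {{u, y}}) = \<Union>F - {u}"
  proof
    show "\<Union>(F - {{u, y}}) \<subseteq> \<Union>F - {u}" using pendant by blast
    show "\<Union>F - {u} \<subseteq> \<Union>(F - {{u, y}})"
    proof
      fix v assume v: "v \<in> \<Union>F - {u}"
      have "\<exists>g\<in>F. g \<noteq> {u, y}" using \<open>F \<noteq> {{u, y}}\<close> \<open>{u, y} \<in> F\<close> by auto
      then obtain g where g: "g \<in> F" "g \<noteq> {u, y}" by blast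
      then obtain a where a: "a \<in> g" using \<open>{} \<notin> F\<close> by (metis all_not_in_conv)
      have "a \<noteq> u" using pendant g a by blast
      show "v \<in> \<Union>(F - {{u, y}})"
      proof (cases "v = a")
        case True
        then show ?thesis using g a by blast
      next
        case False
        have "(a, v) \<in> (adj (F - {{u, y}}))\<^sup>*" using path g a v \<open>a \<noteq> u\<close> by blast
        then show ?thesis using rtrancl_adj_in_Union False by metis
      qed
    qed
  qed
  show "connected_graph (\<Union>(F - {{u, y}})) (F - {{u, y}})"
    unfolding connected_graph_def verts using path by blast
qed

section \<open>Alternating sums over finite sets\<close>

lemma sum_alternating_interval:
  assumes "finite S" "U \<subseteq> S"
  shows "(\<Sum>T | U \<subseteq> T \<and> T \<subseteq> S. (-1::'a::ring_1) ^ card T) = (if U = S then (-1) ^ card S else 0)"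
proof (cases "U = S")
  case True
  then have "{T. U \<subseteq> T \<and> T \<subseteq> S} = {S}" by auto
  then show ?thesis using True by simp
next
  case False
  have fin: "finite {T. U \<subseteq> T \<and> T \<subseteq> S}" using assms(1) by simp
  have "{T \<in> {T. U \<subseteq> T \<and> T \<subseteq> S}. even (card T)} = {T. T \<subseteq> S \<and> U \<subseteq> T \<and> even (card T)}"
    "{T \<in> {T. U \<subseteq> T \<and> T \<subseteq> S}. odd (card T)} = {T. T \<subseteq> S \<and> U \<subseteq> T \<and> odd (card T)}"
    by auto
  then have "card {T \<in> {T. U \<subseteq> T \<and> T \<subseteq> S}. even (card T)} = card {T \<in> {T. U \<subseteq> T \<and> T \<subseteq> S}. odd (card T)}"
    using card_subsupersets_even_odd[OF assms(1), of U] assms(2) False by (simp add: psubset_eq)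
  then show ?thesis using sum_alternating_cancels[OF fin] False by simp
qed

lemma sum_supersets_alternating_inversion:
  fixes f :: "'a set \<Rightarrow> 'b::comm_ring_1"
  assumes "finite E" "H \<subseteq> E"
  shows "(\<Sum>G | H \<subseteq> G \<and> G \<subseteq> E. (-1) ^ card G * (\<Sum>K | G \<subseteq> K \<and> K \<subseteq> E. (-1) ^ card K * f K))
    = f H"
proof -
  have fin: "finite {G. H \<subseteq> G \<and> G \<subseteq> E}" "finite (Pow E)" using assms(1) by simp_all
  have "(\<Sum>G | H \<subseteq> G \<and> G \<subseteq> E. (-1) ^ card G * (\<Sum>K | G \<subseteq> K \<and> K \<subseteq> E. (-1) ^ card K * f K))
      = (\<Sum>G | H \<subseteq> G \<and> G \<subseteq> E. \<Sum>K\<in>{K \<in> Pow E. G \<subseteq> K}. (-1) ^ card G * ((-1) ^ card K * f K))"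
    by (simp add: sum_distrib_left conj_commute)
  also have "\<dots> = (\<Sum>K\<in>Pow E. \<Sum>G\<in>{G \<in> {G. H \<subseteq> G \<and> G \<subseteq> E}. G \<subseteq> K}. (-1) ^ card G * ((-1) ^ card K * f K))"
    by (rule sum.swap_restrict[OF fin])
  also have "\<dots> = (\<Sum>K\<in>Pow E. (\<Sum>G | H \<subseteq> G \<and> G \<subseteq> K. (-1) ^ card G) * ((-1) ^ card K * f K))"
  proof (rule sum.cong[OF refl])
    fix K assume "K \<in> Pow E"
    then have "{G \<in> {G. H \<subseteq> G \<and> G \<subseteq> E}. G \<subseteq> K} = {G. H \<subseteq> G \<and> G \<subseteq> K}" by auto
    then show "(\<Sum>G\<in>{G \<in> {G. H \<subseteq> G \<and> G \<subseteq> E}. G \<subseteq> K}. (-1) ^ card G * ((-1) ^ card K * f K))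
      = (\<Sum>G | H \<subseteq> G \<and> G \<subseteq> K. (-1) ^ card G) * ((-1) ^ card K * f K)"
      by (simp add: sum_distrib_right)
  qed
  also have "\<dots> = (\<Sum>K\<in>Pow E. if K = H then f H else 0)"
  proof (rule sum.cong[OF refl])
    fix K assume K: "K \<in> Pow E"
    show "(\<Sum>G | H \<subseteq> G \<and> G \<subseteq> K. (-1) ^ card G) * ((-1) ^ card K * f K) = (if K = H then f H else 0)"
    proof (cases "H \<subseteq> K")
      case True
      have "finite K" using K assms(1) finite_subset by blast
      have "(-1::'b) ^ card K * (-1) ^ card K = 1" by (simp flip: power_mult_distrib)
      then show ?thesis
        unfolding sum_alternating_interval[OF \<open>finite K\<close> True] mult.assoc[symmetric] by auto
    next
      case False
      then have empty: "{G. H \<subseteq> G \<and> G \<subseteq> K} = {}" and "K \<noteq> H" by auto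
      then show ?thesis unfolding empty by simp
    qed
  qed
  also have "\<dots> = f H" using assms(2) fin(2) by simp
  finally show ?thesis .
qed

lemma sum_prod_Diff_one_plus:
  fixes z :: "'a \<Rightarrow> int"
  assumes R: "finite R"
  shows "(\<Sum>d\<in>R. \<Prod>e\<in>R - {d}. 1 + z e) = (\<Sum>j\<in>{0..<card R}. int (card R - j) * esym j z R)"
proof -
  define P where "P S = (\<Prod>e\<in>S. z e)" for S
  have fP: "finite (Pow R)" using R by simp
  have "(\<Sum>d\<in>R. \<Prod>e\<in>R - {d}. 1 + z e) = (\<Sum>d\<in>R. \<Sum>S\<in>Pow (R - {d}). P S)"
    using R prod_add[of _ z "\<lambda>_. 1"] by (simp add: P_def add.commute)
  also have "\<dots> = (\<Sum>d\<in>R. \<Sum>S\<in>{S \<in> Pow R. d \<notin> S}. P S)"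
    by (intro sum.cong refl arg_cong[where f = "sum P"]) auto
  also have "\<dots> = (\<Sum>S\<in>Pow R. \<Sum>d\<in>{d \<in> R. d \<notin> S}. P S)"
    by (rule sum.swap_restrict[OF R fP])
  also have "\<dots> = (\<Sum>S\<in>Pow R. int (card R - card S) * P S)"
  proof (rule sum.cong[OF refl])
    fix S assume S: "S \<in> Pow R"
    have "{d \<in> R. d \<notin> S} = R - S" by auto
    moreover have "card (R - S) = card R - card S" using S R by (auto intro: card_Diff_subset finite_subset)
    ultimately show "(\<Sum>d\<in>{d \<in> R. d \<notin> S}. P S) = int (card R - card S) * P S" by simp
  qed
  also have "\<dots> = (\<Sum>j\<in>{0..<Suc (card R)}. \<Sum>S\<in>{S \<in> Pow R. card S = j}. int (card R - card S) * P S)"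
    using R by (intro sum.group[symmetric, OF fP]) (auto intro: card_mono simp: less_Suc_eq_le)
  also have "\<dots> = (\<Sum>j\<in>{0..<Suc (card R)}. int (card R - j) * esym j z R)"
  proof (rule sum.cong[OF refl])
    fix j
    have "{S \<in> Pow R. card S = j} = {S. S \<subseteq> R \<and> card S = j}" by auto
    then show "(\<Sum>S\<in>{S \<in> Pow R. card S = j}. int (card R - card S) * P S) = int (card R - j) * esym j z R"
      unfolding esym_def P_def by (simp add: sum_distrib_left)
  qed
  also have "\<dots> = (\<Sum>j\<in>{0..<card R}. int (card R - j) * esym j z R)"
    by simp
  finally show ?thesis .
qed

lemma sum_PiE_coordinate_eq:
  fixes f :: "'i \<Rightarrow> 'a \<Rightarrow> 'b::comm_semiring_1"
  assumes I: "finite I" and S: "\<And>i. i \<in> I \<Longrightarrow> finite (S i)" and d: "d \<in> I"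
  shows "(\<Sum>h\<in>PiE I S. if h d = x then \<Prod>i\<in>I. f i (h i) else 0)
    = (if x \<in> S d then f d x * (\<Prod>i\<in>I - {d}. \<Sum>y\<in>S i. f i y) else 0)"
proof -
  define S' where "S' i = (if i = d then S d \<inter> {x} else S i)" for i
  have "{h \<in> PiE I S. h d = x} = PiE I S'"
    using d unfolding S'_def PiE_def Pi_def by auto
  then have "(\<Sum>h\<in>PiE I S. if h d = x then \<Prod>i\<in>I. f i (h i) else 0)
      = (\<Sum>h\<in>PiE I S'. \<Prod>i\<in>I. f i (h i))"
    using I S by (simp add: sum.inter_filter[symmetric] finite_PiE)
  also have "\<dots> = (\<Prod>i\<in>I. \<Sum>y\<in>S' i. f i y)"
    using I S by (intro prod_sum_PiE[symmetric]) (auto simp: S'_def)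
  also have "\<dots> = (\<Sum>y\<in>S d \<inter> {x}. f d y) * (\<Prod>i\<in>I - {d}. \<Sum>y\<in>S i. f i y)"
    using I d by (simp add: prod.remove S'_def)
  finally show ?thesis by (simp split: if_splits)
qed

locale rooted_tree =
  fixes V :: "'v set" and E :: "'v set set" and A :: 'v
  assumes tree: "is_tree V E" and root_in_V: "A \<in> V"
begin

lemma finite_V: "finite V"
  using tree by (simp add: is_tree_def)

lemma edgeE:
  assumes "e \<in> E"
  obtains a b where "e = {a, b}" "a \<noteq> b" "a \<in> V" "b \<in> V"
  using tree assms unfolding is_tree_def by blast

lemma edge_at:
  assumes "f \<in> E" "u \<in> f"
  obtains y where "f = {u, y}" "u \<noteq> y" "y \<in> V"
  using edgeE[OF assms(1)] assms(2) by (metis insert_commute insertE singletonD)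

lemma edges_subset_Pow: "E \<subseteq> Pow V"
  by (blast elim: edgeE)

lemma finite_E: "finite E"
  using edges_subset_Pow finite_V by (meson finite_Pow_iff finite_subset)

lemma empty_not_edge: "{} \<notin> E"
  by (blast elim: edgeE)

lemma edge_ends_distinct: "{u, w} \<in> E \<Longrightarrow> u \<noteq> w"
  by (metis edgeE doubleton_eq_iff insert_absorb2)

lemma reachable_from_root: "x \<in> V \<Longrightarrow> (A, x) \<in> (adj E)\<^sup>*"
  using tree root_in_V by (simp add: is_tree_def connected_graph_def)

lemma edge_is_bridge: "e \<in> E \<Longrightarrow> \<not> connected_graph V (E - {e})"
  using tree by (simp add: is_tree_def)

definition root_side :: "'v set \<Rightarrow> 'v set" where
  "root_side e = {x. (A, x) \<in> (adj (E - {e}))\<^sup>*}"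

lemma root_in_root_side: "A \<in> root_side e"
  by (simp add: root_side_def)

lemma root_side_iff:
  assumes "{p, q} \<in> E" "{p, q} \<noteq> e"
  shows "p \<in> root_side e \<longleftrightarrow> q \<in> root_side e"
proof -
  have "(p, q) \<in> adj (E - {e})" "(q, p) \<in> adj (E - {e})"
    using assms by (auto simp: adj_def insert_commute)
  then show ?thesis unfolding root_side_def mem_Collect_eq by (blast intro: rtrancl_into_rtrancl)
qed

lemma root_side_edge:
  assumes "{u, w} \<in> E"
  shows "u \<in> root_side {u, w} \<longleftrightarrow> w \<notin> root_side {u, w}"
proof
  assume u: "u \<in> root_side {u, w}"
  show "w \<notin> root_side {u, w}"
  proof
    assume w: "w \<in> root_side {u, w}"
    have "(A, x) \<in> (adj (E - {{u, w}}))\<^sup>*" if "(A, x) \<in> (adj E)\<^sup>*" for x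
      using that
    proof (induction rule: rtrancl_induct)
      case (step y z)
      show ?case
      proof (cases "{y, z} = {u, w}")
        case True
        then have "z = u \<or> z = w" by (auto simp: doubleton_eq_iff)
        then show ?thesis using u w by (auto simp: root_side_def)
      next
        case False
        then have "(y, z) \<in> adj (E - {{u, w}})" using step.hyps(2) by (auto simp: adj_def)
        with step.IH show ?thesis by (rule rtrancl_into_rtrancl)
      qed
    qed simp
    then have "connected_graph V (E - {{u, w}})"
      using root_in_V reachable_from_root by (intro connected_graphI[of A]) auto
    then show False using edge_is_bridge assms by blast
  qed
next
  assume w: "w \<notin> root_side {u, w}"
  have "u \<in> V" using assms edges_subset_Pow by auto
  from rtrancl_adj_Diff_edge[OF reachable_from_root[OF this], of u w]
  show "u \<in> root_side {u, w}" using w by (auto simp: root_side_def)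
qed

text \<open>u \<notin> root_side {u, y} says that {u, y} is the edge leading from u towards A; it is unique.\<close>
lemma edge_towards_root_unique:
  assumes "{u, y} \<in> E" "{u, z} \<in> E"
    and "u \<notin> root_side {u, y}" "u \<notin> root_side {u, z}"
  shows "y = z"
proof (rule ccontr)
  assume "y \<noteq> z"
  then have ne: "{u, y} \<noteq> {u, z}" by (auto simp: doubleton_eq_iff)
  have y: "y \<in> root_side {u, y}" using root_side_edge assms(1,3) by blast
  have zf: "z \<notin> root_side {u, y}" using root_side_iff[OF assms(2)] ne assms(3) by metis
  have yg: "y \<notin> root_side {u, z}" using root_side_iff[OF assms(1)] ne assms(4) by metis
  have "(A, y) \<in> (adj (E - {{u, y}}))\<^sup>*" using y by (simp add: root_side_def)
  from rtrancl_adj_Diff_edge[OF this, of u z] obtain x where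
    "x \<in> {y, u, z}" "(A, x) \<in> (adj (E - {{u, y}} - {{u, z}}))\<^sup>*" by blast
  then have "x \<in> root_side {u, y} \<inter> root_side {u, z}"
    unfolding root_side_def by (auto intro: rtrancl_adj_mono[rotated])
  then show False using \<open>x \<in> {y, u, z}\<close> yg assms(3) zf by blast
qed

section \<open>Edge counts of walks from the root\<close>

definition traversal_time :: "('v set \<Rightarrow> real) \<Rightarrow> ('v set \<Rightarrow> nat) \<Rightarrow> real" where
  "traversal_time t c = (\<Sum>e\<in>E. real (c e) * t e)"

definition support :: "('v set \<Rightarrow> nat) \<Rightarrow> 'v set set" where
  "support c = {e \<in> E. c e \<noteq> 0}"

lemma support_subset: "support c \<subseteq> E"
  by (simp add: support_def)

definition admissible :: "'v set set \<Rightarrow> bool" where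
  "admissible H \<longleftrightarrow> H = {} \<or> H \<in> subtrees_at E A"

text \<open>The edge counts c e of a walk from A to u in a tree: the parity of c e says on which
  side of e the walk ends, and the traversed edges form a subtree containing A and u.
  These conditions are also sufficient.\<close>
definition walk_counts :: "'v \<Rightarrow> ('v set \<Rightarrow> nat) \<Rightarrow> bool" where
  "walk_counts u c \<longleftrightarrow> (\<forall>e\<in>E. odd (c e) \<longleftrightarrow> u \<notin> root_side e) \<and>
     admissible (support c) \<and> u \<in> insert A (\<Union>(support c))"

lemma walk_counts_parity: "walk_counts u c \<Longrightarrow> e \<in> E \<Longrightarrow> odd (c e) \<longleftrightarrow> u \<notin> root_side e"
  by (simp add: walk_counts_def)

lemma traversal_time_upd:
  assumes "f \<in> E"
  shows "traversal_time t (c(f := k)) = traversal_time t c + (real k - real (c f)) * t f"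
  using assms finite_E by (simp add: traversal_time_def sum.remove algebra_simps)

lemma walk_counts_root: "walk_counts A (\<lambda>_. 0)"
  by (simp add: walk_counts_def admissible_def support_def root_in_root_side)

lemma subtree_insert_edge:
  assumes "admissible S" "u \<in> insert A (\<Union>S)" "{u, w} \<in> E"
  shows "insert {u, w} S \<in> subtrees_at E A"
proof (cases "S = {}")
  case True
  then have "u = A" using assms(2) by simp
  have "connected_graph (\<Union>{{A, w}}) {{A, w}}"
    by (rule connected_graphI[of A]) (auto intro: edge_in_rtrancl_adj)
  then show ?thesis using True \<open>u = A\<close> assms(3) by (auto simp: subtrees_at_def)
next
  case False
  then have S: "S \<subseteq> E" "A \<in> \<Union>S" "connected_graph (\<Union>S) S"
    using assms(1) by (auto simp: admissible_def subtrees_at_def)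
  then have "u \<in> \<Union>S" using assms(2) by auto
  then show ?thesis using S assms(3) connected_graph_insert_edge[OF S(3)]
    by (auto simp: subtrees_at_def)
qed

lemma walk_counts_extend:
  assumes "walk_counts u c" "{u, w} \<in> E"
  shows "walk_counts w (c({u, w} := Suc (c {u, w})))"
proof -
  let ?c = "c({u, w} := Suc (c {u, w}))"
  have "odd (?c e) \<longleftrightarrow> w \<notin> root_side e" if "e \<in> E" for e
    using assms that root_side_edge[OF assms(2)] root_side_iff[OF assms(2), of e]
    by (cases "e = {u, w}") (auto simp: walk_counts_def)
  moreover have "support ?c = insert {u, w} (support c)"
    using assms(2) by (auto simp: support_def)
  moreover have "insert {u, w} (support c) \<in> subtrees_at E A"
    using assms by (intro subtree_insert_edge) (auto simp: walk_counts_def)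
  ultimately show ?thesis by (simp add: walk_counts_def admissible_def)
qed

lemma deps_imp_walk_counts:
  assumes "(u, w, s) \<in> deps E t A"
  shows "{u, w} \<in> E \<and> (\<exists>c. walk_counts u c \<and> s = traversal_time t c)"
  using assms
proof (induction rule: deps.induct)
  case (start w)
  then show ?case using walk_counts_root by (auto simp: traversal_time_def)
next
  case (step u w s x)
  then obtain c where uw: "{u, w} \<in> E" and "walk_counts u c" "s = traversal_time t c" by blast
  then have "walk_counts w (c({u, w} := Suc (c {u, w})))"
    and "s + t {u, w} = traversal_time t (c({u, w} := Suc (c {u, w})))"
    using walk_counts_extend traversal_time_upd[OF uw] by auto
  then show ?case using step.hyps(2) by blast
qed

lemma walk_counts_retract_multiple:
  assumes "walk_counts u c" "{u, y} \<in> support c" "c {u, y} \<ge> 2"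
  shows "walk_counts y (c({u, y} := c {u, y} - 1))"
proof -
  let ?c = "c({u, y} := c {u, y} - 1)"
  have f: "{u, y} \<in> E" using assms(2) by (simp add: support_def)
  have "odd (?c e) \<longleftrightarrow> y \<notin> root_side e" if "e \<in> E" for e
  proof (cases "e = {u, y}")
    case True
    have "odd (c {u, y} - 1) \<longleftrightarrow> even (c {u, y})" using assms(3) by (cases "c {u, y}") auto
    then show ?thesis using True assms(1) f root_side_edge[OF f] by (auto simp: walk_counts_def)
  next
    case False
    then show ?thesis using assms(1) that root_side_iff[OF f, of e] by (auto simp: walk_counts_def)
  qed
  moreover have "support ?c = support c" using assms(3) by (auto simp: support_def)
  ultimately show ?thesis using assms(1,2) by (auto simp: walk_counts_def)
qed

lemma walk_counts_retract_pendant: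
  assumes wc: "walk_counts u c" and "u \<noteq> A" and f: "{u, y} \<in> support c"
    and ones: "\<forall>g\<in>support c. u \<in> g \<longrightarrow> c g = 1"
  shows "walk_counts y (c({u, y} := 0))"
proof -
  let ?S = "support c"
  have fE: "{u, y} \<in> E" and uy: "u \<noteq> y" using f edge_ends_distinct by (auto simp: support_def)
  have S: "?S \<in> subtrees_at E A" using wc f by (auto simp: walk_counts_def admissible_def)
  have away: "u \<notin> root_side g" if "g \<in> ?S" "u \<in> g" for g
  proof -
    have "g \<in> E" using that by (simp add: support_def)
    moreover have "c g = 1" using ones that by blast
    ultimately show ?thesis using walk_counts_parity[OF wc, of g] by simp
  qed
  have away_f: "u \<notin> root_side {u, y}" using away[OF f] by simp
  have pendant: "\<forall>g\<in>?S. u \<in> g \<longrightarrow> g = {u, y}"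
  proof (intro ballI impI)
    fix g assume g: "g \<in> ?S" "u \<in> g"
    obtain z where gz: "g = {u, z}" using edge_at[of g u] g by (auto simp: support_def)
    have "{u, z} \<in> E" using g(1) unfolding gz by (simp add: support_def)
    moreover have "u \<notin> root_side {u, z}" using away[OF g] unfolding gz .
    ultimately have "y = z" using edge_towards_root_unique[OF fE _ away_f] by blast
    then show "g = {u, y}" using gz by simp
  qed
  have parity: "odd ((c({u, y} := 0)) e) \<longleftrightarrow> y \<notin> root_side e" if "e \<in> E" for e
  proof (cases "e = {u, y}")
    case True
    then show ?thesis using away_f root_side_edge[OF fE] by simp
  next
    case False
    then have "u \<in> root_side e \<longleftrightarrow> y \<in> root_side e" using root_side_iff[OF fE] by metis
    then show ?thesis using wc that False by (simp add: walk_counts_def)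
  qed
  have "admissible (?S - {{u, y}}) \<and> y \<in> insert A (\<Union>(?S - {{u, y}}))"
  proof (cases "?S = {{u, y}}")
    case True
    then have "A \<in> {u, y}" using S by (simp add: subtrees_at_def)
    then have "y = A" using \<open>u \<noteq> A\<close> by simp
    then show ?thesis using True by (simp add: admissible_def)
  next
    case False
    have SE: "?S \<subseteq> E" by (simp add: support_def)
    have conn: "connected_graph (\<Union>?S) ?S" and "A \<in> \<Union>?S" using S by (simp_all add: subtrees_at_def)
    have "{} \<notin> ?S" using SE empty_not_edge by blast
    note rest = connected_graph_Diff_pendant_edge[OF conn f uy pendant False this]
    have "A \<in> \<Union>(?S - {{u, y}})" "y \<in> \<Union>(?S - {{u, y}})"
      unfolding rest(1) using \<open>A \<in> \<Union>?S\<close> \<open>u \<noteq> A\<close> f uy by auto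
    moreover have "?S - {{u, y}} \<noteq> {}" using False f by auto
    ultimately show ?thesis using rest(2) SE by (auto simp: admissible_def subtrees_at_def)
  qed
  moreover have "support (c({u, y} := 0)) = ?S - {{u, y}}" by (auto simp: support_def)
  ultimately show ?thesis using parity by (simp add: walk_counts_def)
qed

lemma walk_counts_retract:
  assumes wc: "walk_counts u c" and ne: "support c \<noteq> {}"
  obtains y where "{u, y} \<in> E" "c {u, y} \<noteq> 0" "walk_counts y (c({u, y} := c {u, y} - 1))"
proof (cases "\<exists>f\<in>support c. u \<in> f \<and> c f \<ge> 2")
  case True
  then obtain f where f: "f \<in> support c" "u \<in> f" "c f \<ge> 2" by blast
  then obtain y where fy: "f = {u, y}" using edge_at[of f u] by (auto simp: support_def)
  have "{u, y} \<in> support c" "c {u, y} \<ge> 2" using f unfolding fy by auto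
  then show ?thesis using that walk_counts_retract_multiple[OF wc] by (simp add: support_def)
next
  case False
  have S: "support c \<in> subtrees_at E A" using wc ne by (auto simp: walk_counts_def admissible_def)
  have "u \<noteq> A"
  proof
    assume uA: "u = A"
    obtain f where f: "f \<in> support c" "u \<in> f" using S uA by (auto simp: subtrees_at_def)
    then have "even (c f)" "c f \<noteq> 0"
      using wc root_in_root_side uA by (auto simp: walk_counts_def support_def)
    then have "c f \<ge> 2" by presburger
    then show False using False f by blast
  qed
  then obtain f where f: "f \<in> support c" "u \<in> f" using wc by (auto simp: walk_counts_def)
  then obtain y where fy: "f = {u, y}" using edge_at[of f u] by (auto simp: support_def)
  have y: "{u, y} \<in> support c" using f unfolding fy by simp
  have ones: "\<forall>g\<in>support c. u \<in> g \<longrightarrow> c g = 1" using False by (auto simp: support_def)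
  then have "c {u, y} = 1" using y by simp
  moreover have "walk_counts y (c({u, y} := 0))"
    using walk_counts_retract_pendant[OF wc \<open>u \<noteq> A\<close> y ones] .
  ultimately show ?thesis using that[of y] y by (simp add: support_def)
qed

lemma walk_counts_imp_deps:
  assumes "walk_counts u c" "{u, x} \<in> E"
  shows "(u, x, traversal_time t c) \<in> deps E t A"
  using assms
proof (induction "sum c E" arbitrary: u c x rule: less_induct)
  case less
  show ?case
  proof (cases "support c = {}")
    case True
    then have "u = A" "traversal_time t c = 0"
      using less.prems(1) by (auto simp: walk_counts_def traversal_time_def support_def)
    then show ?thesis using less.prems(2) deps.start by simp
  next
    case False
    obtain y where y: "{u, y} \<in> E" "c {u, y} \<noteq> 0"
      and wc: "walk_counts y (c({u, y} := c {u, y} - 1))" (is "walk_counts y ?c")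
      using walk_counts_retract[OF less.prems(1) False] .
    have "sum ?c E < sum c E" using y finite_E by (simp add: sum.remove)
    then have "(y, u, traversal_time t ?c) \<in> deps E t A"
      using less.hyps wc y(1) by (simp add: insert_commute)
    from deps.step[OF this less.prems(2)] show ?thesis
      using traversal_time_upd[OF y(1), of t c] y(2) by (simp add: insert_commute of_nat_diff)
  qed
qed

section \<open>Branches at the root\<close>

abbreviation root_edges :: "'v set set" where
  "root_edges \<equiv> incident E A"

lemma root_edge_in_E: "e \<in> root_edges \<Longrightarrow> e \<in> E"
  by (simp add: incident_def)

lemma finite_root_edges: "finite root_edges"
  using finite_E by (simp add: incident_def)

definition far_end :: "'v set \<Rightarrow> 'v" where
  "far_end e = (SOME u. e = {A, u} \<and> A \<noteq> u)"

lemma root_edge_far_end: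
  assumes "e \<in> root_edges"
  shows "e = {A, far_end e}" "A \<noteq> far_end e"
proof -
  have "\<exists>u. e = {A, u} \<and> A \<noteq> u"
    using assms edge_at[of e A] by (metis incident_def mem_Collect_eq)
  then show "e = {A, far_end e}" "A \<noteq> far_end e"
    unfolding far_end_def by (metis (mono_tags, lifting) someI_ex)+
qed

lemma far_end_eq: "e \<in> root_edges \<Longrightarrow> e = {A, u} \<Longrightarrow> A \<noteq> u \<Longrightarrow> far_end e = u"
  by (metis doubleton_eq_iff root_edge_far_end)

definition beyond :: "'v set \<Rightarrow> 'v set" where
  "beyond e = {x. (far_end e, x) \<in> (adj (E - {e}))\<^sup>*}"

lemma far_end_beyond: "far_end e \<in> beyond e"
  by (simp add: beyond_def)

lemma root_not_beyond:
  assumes e: "e \<in> root_edges"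
  shows "A \<notin> beyond e"
proof
  assume "A \<in> beyond e"
  then have "(A, far_end e) \<in> (adj (E - {e}))\<^sup>*"
    unfolding beyond_def by (simp add: rtrancl_adj_sym)
  then have "far_end e \<in> root_side {A, far_end e}"
    using root_edge_far_end(1)[OF e] by (simp add: root_side_def)
  moreover have "{A, far_end e} \<in> E" using root_edge_in_E[OF e] root_edge_far_end(1)[OF e] by simp
  ultimately show False using root_side_edge root_in_root_side by blast
qed

lemma beyond_iff:
  assumes "{p, q} \<in> E" "{p, q} \<noteq> e"
  shows "p \<in> beyond e \<longleftrightarrow> q \<in> beyond e"
proof -
  have "(p, q) \<in> adj (E - {e})" "(q, p) \<in> adj (E - {e})"
    using assms by (auto simp: adj_def insert_commute)
  then show ?thesis unfolding beyond_def mem_Collect_eq by (blast intro: rtrancl_into_rtrancl)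
qed

lemma edge_subset_beyond:
  assumes "g \<in> E" "g \<noteq> e" "x \<in> g" "x \<in> beyond e"
  shows "g \<subseteq> beyond e"
proof -
  obtain y where "g = {x, y}" using edge_at assms by blast
  then show ?thesis using beyond_iff[of x y e] assms by auto
qed

lemma branch_subset_beyond:
  assumes e: "e \<in> root_edges" and g: "g \<in> branch E A e" "g \<noteq> e"
  shows "g \<in> E" "g \<subseteq> beyond e"
proof -
  define u where "u = far_end e"
  have eu: "e = {A, u}" "A \<noteq> u" unfolding u_def using root_edge_far_end[OF e] by simp_all
  obtain F where F: "F \<subseteq> E" "e \<in> F" "connected_graph (\<Union>F) F" "\<forall>f\<in>F. A \<in> f \<longrightarrow> f = e" "g \<in> F"
    using g(1) unfolding branch_def by blast
  show "g \<in> E" using F by blast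
  show "g \<subseteq> beyond e"
  proof
    fix v assume v: "v \<in> g"
    have "v \<noteq> A" using F(4,5) g(2) v by blast
    have "(u, v) \<in> (adj F)\<^sup>*"
      using F(2,3,5) v eu(1) unfolding connected_graph_def by blast
    from rtrancl_adj_Diff_pendant_edge[OF eu(2) _ this eu(2)[symmetric]]
    have "(u, v) \<in> (adj (F - {{A, u}}))\<^sup>*" using F(4) eu(1) \<open>v \<noteq> A\<close> by simp
    then have "(u, v) \<in> (adj (E - {e}))\<^sup>*" by (rule rtrancl_adj_mono[rotated]) (use F(1) eu(1) in blast)
    then show "v \<in> beyond e" by (simp add: beyond_def u_def)
  qed
qed

lemma beyond_edges_subset_branch:
  assumes e: "e \<in> root_edges"
  shows "insert e {g \<in> E - {e}. g \<subseteq> beyond e} \<subseteq> branch E A e" (is "?F \<subseteq> _")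
proof -
  define u where "u = far_end e"
  have eu: "e = {A, u}" "A \<noteq> u" unfolding u_def using root_edge_far_end[OF e] by simp_all
  have reach: "(u, x) \<in> (adj ?F)\<^sup>*" if "x \<in> beyond e" for x
  proof -
    have "(u, x) \<in> (adj (E - {e}))\<^sup>*" using that by (simp add: beyond_def u_def)
    then show ?thesis
    proof (induction rule: rtrancl_induct)
      case (step b b')
      then have "b \<in> beyond e" by (simp add: beyond_def u_def)
      moreover have ed: "{b, b'} \<in> E" "{b, b'} \<noteq> e" using step.hyps(2) by (auto simp: adj_def)
      ultimately have "{b, b'} \<subseteq> beyond e" using edge_subset_beyond by auto
      then have "(b, b') \<in> adj ?F" using ed by (auto simp: adj_def)
      with step.IH show ?case by (rule rtrancl_into_rtrancl)
    qed simp
  qed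
  have "connected_graph (\<Union>?F) ?F"
  proof (rule connected_graphI[of u])
    show "u \<in> \<Union>?F" using eu by blast
    fix x assume "x \<in> \<Union>?F"
    then consider "x = A" | "x = u" | "x \<in> beyond e" using eu by blast
    then show "(u, x) \<in> (adj ?F)\<^sup>*"
    proof cases
      case 1
      have "{u, A} \<in> ?F" using eu by (simp add: insert_commute)
      then show ?thesis using 1 by (intro edge_in_rtrancl_adj) simp
    next
      case 3
      then show ?thesis by (rule reach)
    qed simp
  qed
  moreover have "\<forall>f\<in>?F. A \<in> f \<longrightarrow> f = e" using root_not_beyond[OF e] by auto
  moreover have "?F \<subseteq> E" using root_edge_in_E[OF e] by auto
  ultimately show ?thesis unfolding branch_def by blast
qed

lemma branch_eq:
  assumes "e \<in> root_edges"
  shows "branch E A e = insert e {g \<in> E - {e}. g \<subseteq> beyond e}"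
  using branch_subset_beyond[OF assms] beyond_edges_subset_branch[OF assms] by blast

lemma branch_subset: "e \<in> root_edges \<Longrightarrow> branch E A e \<subseteq> E"
  using branch_eq root_edge_in_E by auto

lemma root_edge_in_branch: "e \<in> root_edges \<Longrightarrow> e \<in> branch E A e"
  using branch_eq by auto

lemma finite_branch: "e \<in> root_edges \<Longrightarrow> finite (branch E A e)"
  using branch_subset finite_E finite_subset by blast

lemma Union_branch_subset:
  assumes "e \<in> root_edges"
  shows "\<Union>(branch E A e) \<subseteq> insert A (beyond e)"
  using branch_eq[OF assms] root_edge_far_end[OF assms] far_end_beyond[of e] by auto

lemma root_edge_in_branch_eq:
  assumes "e \<in> root_edges" "e' \<in> root_edges" "e' \<in> branch E A e"
  shows "e' = e"
  using assms branch_eq[OF assms(1)] root_not_beyond[OF assms(1)] by (auto simp: incident_def)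

lemma branches_disjoint:
  assumes e: "e \<in> root_edges" and e': "e' \<in> root_edges" and "e \<noteq> e'"
  shows "branch E A e \<inter> branch E A e' = {}"
proof (rule ccontr)
  assume "branch E A e \<inter> branch E A e' \<noteq> {}"
  then obtain g where g: "g \<in> branch E A e" "g \<in> branch E A e'" by blast
  have "g \<noteq> e" "g \<noteq> e'" using root_edge_in_branch_eq e e' g \<open>e \<noteq> e'\<close> by metis+
  then have gC: "g \<subseteq> beyond e" "g \<subseteq> beyond e'" "g \<in> E"
    using branch_subset_beyond e e' g by blast+
  then obtain x where x: "x \<in> g" using empty_not_edge by (metis all_not_in_conv)
  define u where "u = far_end e"
  define u' where "u' = far_end e'"
  have eu: "e = {A, u}" "A \<noteq> u" "e' = {A, u'}" "A \<noteq> u'"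
    unfolding u_def u'_def using root_edge_far_end e e' by simp_all
  have "(u, x) \<in> (adj (E - {e}))\<^sup>*" using gC x by (auto simp: beyond_def u_def)
  from rtrancl_adj_Diff_edge[OF this, of A u'] consider
    "(u, x) \<in> (adj (E - {e} - {e'}))\<^sup>*" | "(u, A) \<in> (adj (E - {e} - {e'}))\<^sup>*"
    | "(u, u') \<in> (adj (E - {e} - {e'}))\<^sup>*" using eu by blast
  then show False
  proof cases
    case 1
    have ux: "(u, x) \<in> (adj (E - {e'}))\<^sup>*" using 1 by (rule rtrancl_adj_mono[rotated]) auto
    have "(u', x) \<in> (adj (E - {e'}))\<^sup>*" using gC x by (auto simp: beyond_def u'_def)
    then have "(u', u) \<in> (adj (E - {e'}))\<^sup>*" using ux rtrancl_adj_sym by (meson rtrancl_trans)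
    moreover have "(u, A) \<in> adj (E - {e'})"
      using eu \<open>e \<noteq> e'\<close> root_edge_in_E[OF e] by (auto simp: adj_def insert_commute)
    ultimately have "A \<in> beyond e'" by (auto simp: beyond_def u'_def)
    then show False using root_not_beyond[OF e'] by simp
  next
    case 2
    then have "A \<in> beyond e" unfolding beyond_def u_def[symmetric] by (auto intro: rtrancl_adj_mono[rotated])
    then show False using root_not_beyond[OF e] by simp
  next
    case 3
    then have "(u, u') \<in> (adj (E - {e}))\<^sup>*" by (rule rtrancl_adj_mono[rotated]) auto
    moreover have "(u', A) \<in> adj (E - {e})"
      using eu \<open>e \<noteq> e'\<close> root_edge_in_E[OF e'] by (auto simp: adj_def insert_commute)
    ultimately have "A \<in> beyond e" by (auto simp: beyond_def u_def)
    then show False using root_not_beyond[OF e] by simp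
  qed
qed

lemma beyond_some_root_edge:
  assumes "(A, x) \<in> (adj E)\<^sup>*" "x \<noteq> A"
  shows "\<exists>e\<in>root_edges. x \<in> beyond e"
  using assms
proof (induction rule: rtrancl_induct)
  case (step b b')
  have ed: "{b, b'} \<in> E" using step.hyps(2) by (simp add: adj_def)
  show ?case
  proof (cases "b = A")
    case True
    then have eI: "{A, b'} \<in> root_edges" using ed by (simp add: incident_def)
    have "far_end {A, b'} = b'" using far_end_eq[OF eI] step.prems by simp
    then show ?thesis using eI far_end_beyond by metis
  next
    case False
    then obtain e where e: "e \<in> root_edges" "b \<in> beyond e" using step.IH by blast
    show ?thesis
    proof (cases "{b, b'} = e")
      case True
      then have "b' = far_end e"
        using root_edge_far_end(1)[OF e(1)] step.prems False by (auto simp: doubleton_eq_iff)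
      then show ?thesis using e far_end_beyond by metis
    next
      case False
      then show ?thesis using beyond_iff[OF ed False] e by auto
    qed
  qed
qed simp

lemma edge_in_some_branch:
  assumes g: "g \<in> E"
  shows "\<exists>e\<in>root_edges. g \<in> branch E A e"
proof (cases "A \<in> g")
  case True
  then have "g \<in> root_edges" using g by (simp add: incident_def)
  then show ?thesis using root_edge_in_branch by blast
next
  case False
  obtain x where x: "x \<in> g" using g empty_not_edge by (metis all_not_in_conv)
  have "x \<in> V" using x g edges_subset_Pow by auto
  then obtain e where e: "e \<in> root_edges" "x \<in> beyond e"
    using beyond_some_root_edge reachable_from_root False x by metis
  have "g \<noteq> e" using False root_edge_far_end(1)[OF e(1)] by auto
  then have "g \<subseteq> beyond e" using edge_subset_beyond g x e by blast
  then show ?thesis using e branch_eq g \<open>g \<noteq> e\<close> by auto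
qed

lemma Union_branches: "(\<Union>e\<in>root_edges. branch E A e) = E"
  using edge_in_some_branch branch_subset by blast

lemma subtree_of_branch_contains_root_edge:
  assumes e: "e \<in> root_edges" and F: "F \<in> subtrees_at (branch E A e) A"
  shows "e \<in> F"
proof -
  obtain g where g: "g \<in> F" "A \<in> g" using F by (auto simp: subtrees_at_def)
  have "g \<in> branch E A e" using F g by (auto simp: subtrees_at_def)
  moreover have "g \<in> root_edges" using calculation g branch_subset[OF e] by (auto simp: incident_def)
  ultimately show ?thesis using root_edge_in_branch_eq[OF e] g by auto
qed

lemma rtrancl_adj_Int_branch:
  assumes HE: "H \<subseteq> E" and e: "e \<in> root_edges"
    and "(A, b) \<in> (adj H)\<^sup>*" "b \<in> beyond e"
  shows "(A, b) \<in> (adj (H \<inter> branch E A e))\<^sup>*"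
  using assms(3,4)
proof (induction rule: rtrancl_induct)
  case (step b b')
  define u where "u = far_end e"
  have eu: "e = {A, u}" "A \<noteq> u" unfolding u_def using root_edge_far_end[OF e] by simp_all
  have ed: "{b, b'} \<in> H" using step.hyps(2) by (simp add: adj_def)
  show ?case
  proof (cases "b \<in> beyond e")
    case True
    have "{b, b'} \<noteq> e"
      using eu True step.prems root_not_beyond[OF e] by (auto simp: doubleton_eq_iff)
    then have "{b, b'} \<in> branch E A e"
      using branch_eq[OF e] edge_subset_beyond[of "{b, b'}" e b] ed HE True by auto
    then have "(b, b') \<in> adj (H \<inter> branch E A e)" using ed by (auto simp: adj_def)
    with step.IH[OF True] show ?thesis by (rule rtrancl_into_rtrancl)
  next
    case False
    have "{b, b'} = e" using beyond_iff[of b b' e] ed HE False step.prems by auto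
    then have "b = A" "b' = u"
      using far_end_beyond[of e] False eu unfolding u_def by (auto simp: doubleton_eq_iff)
    moreover have "e \<in> H \<inter> branch E A e" using \<open>{b, b'} = e\<close> ed root_edge_in_branch[OF e] by auto
    ultimately show ?thesis using eu by (intro edge_in_rtrancl_adj) auto
  qed
qed simp

lemma subtree_Int_branch:
  assumes H: "H \<in> subtrees_at E A" and e: "e \<in> root_edges" and ne: "H \<inter> branch E A e \<noteq> {}"
  shows "H \<inter> branch E A e \<in> subtrees_at (branch E A e) A"
proof -
  let ?He = "H \<inter> branch E A e"
  have HE: "H \<subseteq> E" using H by (auto simp: subtrees_at_def)
  have AH: "A \<in> \<Union>H" and cH: "connected_graph (\<Union>H) H" using H by (auto simp: subtrees_at_def)
  have reach: "(A, x) \<in> (adj ?He)\<^sup>*" if "x \<in> \<Union>?He" for x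
  proof -
    have "x \<in> insert A (beyond e)" using that Union_branch_subset[OF e] by auto
    moreover have "(A, x) \<in> (adj H)\<^sup>*" using that AH cH by (auto simp: connected_graph_def)
    ultimately show ?thesis using rtrancl_adj_Int_branch[OF HE e] by auto
  qed
  have AHe: "A \<in> \<Union>?He"
  proof -
    obtain g where g: "g \<in> ?He" using ne by blast
    obtain x where x: "x \<in> g" using g HE empty_not_edge by (metis IntD1 all_not_in_conv subsetD)
    show ?thesis
    proof (cases "x = A")
      case True then show ?thesis using g x by blast
    next
      case False then show ?thesis using rtrancl_adj_in_Union[OF reach[of x]] g x by blast
    qed
  qed
  have "connected_graph (\<Union>?He) ?He" using connected_graphI[OF AHe] reach by blast
  then show ?thesis using AHe ne by (auto simp: subtrees_at_def)
qed

lemma subtree_from_branch_parts: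
  assumes HE: "H \<subseteq> E" and ne: "H \<noteq> {}"
    and parts: "\<And>e. e \<in> root_edges \<Longrightarrow>
      H \<inter> branch E A e = {} \<or> H \<inter> branch E A e \<in> subtrees_at (branch E A e) A"
  shows "H \<in> subtrees_at E A"
proof -
  have reach: "(A, x) \<in> (adj H)\<^sup>*" "A \<in> \<Union>H" if xH: "x \<in> \<Union>H" for x
  proof -
    obtain g where g: "g \<in> H" "x \<in> g" using xH by blast
    then obtain e where e: "e \<in> root_edges" "g \<in> branch E A e" using edge_in_some_branch HE by blast
    then have S: "H \<inter> branch E A e \<in> subtrees_at (branch E A e) A" using parts g by blast
    have "(A, x) \<in> (adj (H \<inter> branch E A e))\<^sup>*"
      using S g e by (auto simp: subtrees_at_def connected_graph_def)
    then show "(A, x) \<in> (adj H)\<^sup>*" by (rule rtrancl_adj_mono[rotated]) auto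
    show "A \<in> \<Union>H" using S by (auto simp: subtrees_at_def)
  qed
  obtain g x where "g \<in> H" "x \<in> g" using ne HE empty_not_edge by (metis all_not_in_conv subsetD)
  then have AH: "A \<in> \<Union>H" using reach(2) by blast
  show ?thesis using connected_graphI[OF AH] reach AH HE ne by (auto simp: subtrees_at_def)
qed

section \<open>Births at the root and the coefficients c_G\<close>

text \<open>Points born at A when the process returns there having traversed exactly the edges of H
  (each an even number of times): one per root edge that carried no arriving point.\<close>
definition births :: "'v set set \<Rightarrow> int" where
  "births H = (if admissible H then int (card (root_edges - H)) else 0)"

definition branch_choices :: "'v set set \<Rightarrow> 'v set \<Rightarrow> 'v set set set" where
  "branch_choices G e =
     {X. (X = {} \<or> X \<in> subtrees_at (branch E A e) A) \<and> G \<inter> branch E A e \<subseteq> X}"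

definition glue :: "('v set \<Rightarrow> 'v set set) \<Rightarrow> 'v set set" where
  "glue h = (\<Union>e\<in>root_edges. h e)"

lemma branch_choice_subset: "X \<in> branch_choices G e \<Longrightarrow> X \<subseteq> branch E A e"
  by (auto simp: branch_choices_def subtrees_at_def)

lemma finite_branch_choices:
  assumes "e \<in> root_edges"
  shows "finite (branch_choices G e)"
proof -
  have "branch_choices G e \<subseteq> Pow (branch E A e)" using branch_choice_subset by blast
  then show ?thesis using finite_branch[OF assms] by (meson finite_Pow_iff finite_subset)
qed

lemma glue_Int_branch:
  assumes h: "h \<in> PiE root_edges (branch_choices G)" and e: "e \<in> root_edges"
  shows "glue h \<inter> branch E A e = h e"
proof -
  have "h e' \<inter> branch E A e = (if e' = e then h e else {})" if "e' \<in> root_edges" for e'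
    using h that branch_choice_subset[of "h e'"] branches_disjoint[OF that e] by (auto simp: PiE_def)
  then have "glue h \<inter> branch E A e = (\<Union>e'\<in>root_edges. if e' = e then h e else {})"
    unfolding glue_def by (auto simp del: if_image_distrib)
  also have "\<dots> = h e" using e by auto
  finally show ?thesis .
qed

lemma root_edges_Diff_glue:
  assumes h: "h \<in> PiE root_edges (branch_choices G)"
  shows "root_edges - glue h = {e \<in> root_edges. h e = {}}"
proof -
  have "e \<in> glue h \<longleftrightarrow> h e \<noteq> {}" if e: "e \<in> root_edges" for e
  proof -
    have "h e \<in> branch_choices G e" using h e by auto
    then have "h e = {} \<or> e \<in> h e"
      using subtree_of_branch_contains_root_edge[OF e] by (auto simp: branch_choices_def)
    then show ?thesis using glue_Int_branch[OF h e] root_edge_in_branch[OF e] by blast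
  qed
  then show ?thesis by auto
qed

lemma card_glue:
  assumes h: "h \<in> PiE root_edges (branch_choices G)"
  shows "card (glue h) = (\<Sum>e\<in>root_edges. card (h e))"
  unfolding glue_def
proof (rule card_UN_disjoint[OF finite_root_edges])
  have sub: "h e \<subseteq> branch E A e" if "e \<in> root_edges" for e
    using h that branch_choice_subset by blast
  show "\<forall>e\<in>root_edges. finite (h e)" using sub finite_branch finite_subset by blast
  show "\<forall>e\<in>root_edges. \<forall>e'\<in>root_edges. e \<noteq> e' \<longrightarrow> h e \<inter> h e' = {}"
    using sub branches_disjoint by blast
qed

lemma bij_betw_glue:
  assumes G: "G \<subseteq> E"
  shows "bij_betw glue (PiE root_edges (branch_choices G)) {H. G \<subseteq> H \<and> H \<subseteq> E \<and> admissible H}"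
proof (rule bij_betw_imageI)
  show "inj_on glue (PiE root_edges (branch_choices G))"
  proof (rule inj_onI)
    fix h h' assume h: "h \<in> PiE root_edges (branch_choices G)"
      and h': "h' \<in> PiE root_edges (branch_choices G)" and "glue h = glue h'"
    then show "h = h'" using glue_Int_branch[OF h] glue_Int_branch[OF h'] by (metis PiE_ext)
  qed
  show "glue ` PiE root_edges (branch_choices G) = {H. G \<subseteq> H \<and> H \<subseteq> E \<and> admissible H}"
  proof (intro equalityI subsetI)
    fix H assume "H \<in> glue ` PiE root_edges (branch_choices G)"
    then obtain h where h: "h \<in> PiE root_edges (branch_choices G)" and H: "H = glue h" by blast
    have parts: "H \<inter> branch E A e \<in> branch_choices G e" if "e \<in> root_edges" for e
      using glue_Int_branch[OF h that] h that H by auto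
    have "H \<subseteq> E" using parts branch_choice_subset branch_subset unfolding H glue_def
      by (metis PiE_iff UN_least branch_choice_subset branch_subset h order_trans)
    moreover have "G \<subseteq> H"
      using G parts Union_branches unfolding branch_choices_def by blast
    moreover have "admissible H"
      using subtree_from_branch_parts[OF \<open>H \<subseteq> E\<close>] parts
      by (auto simp: admissible_def branch_choices_def)
    ultimately show "H \<in> {H. G \<subseteq> H \<and> H \<subseteq> E \<and> admissible H}" by blast
  next
    fix H assume H: "H \<in> {H. G \<subseteq> H \<and> H \<subseteq> E \<and> admissible H}"
    define h where "h = restrict (\<lambda>e. H \<inter> branch E A e) root_edges"
    have "H \<inter> branch E A e \<in> branch_choices G e" if e: "e \<in> root_edges" for e
      using H subtree_Int_branch[OF _ e]
      by (cases "H \<inter> branch E A e = {}") (auto simp: branch_choices_def admissible_def)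
    then have "h \<in> PiE root_edges (branch_choices G)" by (simp add: h_def)
    moreover have "glue h = H" using H Union_branches by (auto simp: glue_def h_def)
    ultimately show "H \<in> glue ` PiE root_edges (branch_choices G)" by blast
  qed
qed

lemma sum_branch_choices_avoiding:
  assumes e: "e \<in> root_edges" and "G \<inter> branch E A e = {}"
  shows "(\<Sum>X\<in>branch_choices G e. (-1::int) ^ card X) = 1 + zz (branch E A e) {} A"
proof -
  have "subtrees_at (branch E A e) A \<subseteq> Pow (branch E A e)" by (auto simp: subtrees_at_def)
  then have "finite (subtrees_at (branch E A e) A)"
    using finite_branch[OF e] by (meson finite_Pow_iff finite_subset)
  moreover have "branch_choices G e = insert {} (subtrees_at (branch E A e) A)"
    using assms(2) by (auto simp: branch_choices_def)
  moreover have "{} \<notin> subtrees_at (branch E A e) A" by (simp add: subtrees_at_def)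
  ultimately show ?thesis by (simp add: zz_def)
qed

lemma sum_branch_choices_meeting:
  assumes "G \<inter> branch E A e \<noteq> {}"
  shows "(\<Sum>X\<in>branch_choices G e. (-1::int) ^ card X)
    = (-1) ^ card (G \<inter> branch E A e) * zz (branch E A e) (G \<inter> branch E A e) A"
proof -
  have "branch_choices G e = {F \<in> subtrees_at (branch E A e) A. G \<inter> branch E A e \<subseteq> F}"
    using assms by (auto simp: branch_choices_def)
  moreover have "(-1::int) ^ card (G \<inter> branch E A e) * (-1) ^ card (G \<inter> branch E A e) = 1"
    by (simp flip: power_mult_distrib)
  ultimately show ?thesis unfolding zz_def mult.assoc[symmetric] by simp
qed

lemma card_eq_sum_card_Int_branch:
  assumes "G \<subseteq> E"
  shows "card G = (\<Sum>e\<in>root_edges. card (G \<inter> branch E A e))"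
proof -
  have "card G = card (\<Union>e\<in>root_edges. G \<inter> branch E A e)" using assms Union_branches by (metis Int_UN_distrib inf.absorb1)
  also have "\<dots> = (\<Sum>e\<in>root_edges. card (G \<inter> branch E A e))"
    using finite_branch branches_disjoint by (intro card_UN_disjoint[OF finite_root_edges]) blast+
  finally show ?thesis .
qed

lemma sum_alternating_births_eq_sum_branch_choices:
  assumes G: "G \<subseteq> E"
  shows "(\<Sum>H | G \<subseteq> H \<and> H \<subseteq> E. (-1) ^ card H * births H)
    = (\<Sum>d | d \<in> root_edges \<and> G \<inter> branch E A d = {}.
         \<Prod>e\<in>root_edges - {d}. \<Sum>X\<in>branch_choices G e. (-1::int) ^ card X)"
proof -
  let ?P = "PiE root_edges (branch_choices G)"
  define sg where "sg h = (\<Prod>e\<in>root_edges. (-1::int) ^ card (h e))" for h :: "'v set \<Rightarrow> 'v set set"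
  have fin: "finite {H. G \<subseteq> H \<and> H \<subseteq> E}" "finite ?P"
    using finite_E finite_root_edges finite_branch_choices by (auto simp: finite_PiE)
  have "(\<Sum>H | G \<subseteq> H \<and> H \<subseteq> E. (-1) ^ card H * births H)
      = (\<Sum>H | G \<subseteq> H \<and> H \<subseteq> E \<and> admissible H. (-1) ^ card H * int (card (root_edges - H)))"
    using sum.inter_filter[OF fin(1), of "\<lambda>H. (-1) ^ card H * int (card (root_edges - H))" admissible]
    by (simp add: births_def conj_assoc if_distrib[of "\<lambda>x. _ * x"] cong: if_cong)
  also have "\<dots> = (\<Sum>h\<in>?P. (-1) ^ card (glue h) * int (card (root_edges - glue h)))"
    by (rule sum.reindex_bij_betw[OF bij_betw_glue[OF G], symmetric])
  also have "\<dots> = (\<Sum>h\<in>?P. \<Sum>d\<in>root_edges. if h d = {} then sg h else 0)"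
  proof (rule sum.cong[OF refl])
    fix h assume h: "h \<in> ?P"
    have "(-1::int) ^ card (glue h) = sg h" unfolding card_glue[OF h] sg_def by (rule power_sum)
    moreover have "int (card (root_edges - glue h)) = (\<Sum>d\<in>root_edges. if h d = {} then 1 else 0)"
      unfolding root_edges_Diff_glue[OF h] using finite_root_edges by (simp add: sum.If_cases Int_def)
    ultimately show "(-1) ^ card (glue h) * int (card (root_edges - glue h))
        = (\<Sum>d\<in>root_edges. if h d = {} then sg h else 0)"
      by (simp add: sum_distrib_left if_distrib[of "\<lambda>x. _ * x"] cong: if_cong)
  qed
  also have "\<dots> = (\<Sum>d\<in>root_edges. \<Sum>h\<in>?P. if h d = {} then sg h else 0)"
    by (rule sum.swap)
  also have "\<dots> = (\<Sum>d\<in>root_edges. if G \<inter> branch E A d = {} then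
      \<Prod>e\<in>root_edges - {d}. \<Sum>X\<in>branch_choices G e. (-1::int) ^ card X else 0)"
  proof (rule sum.cong[OF refl])
    fix d assume "d \<in> root_edges"
    have "{} \<in> branch_choices G d \<longleftrightarrow> G \<inter> branch E A d = {}" by (auto simp: branch_choices_def)
    then show "(\<Sum>h\<in>?P. if h d = {} then sg h else 0) = (if G \<inter> branch E A d = {} then
        \<Prod>e\<in>root_edges - {d}. \<Sum>X\<in>branch_choices G e. (-1::int) ^ card X else 0)"
      unfolding sg_def
      using sum_PiE_coordinate_eq[OF finite_root_edges finite_branch_choices \<open>d \<in> root_edges\<close>,
          where x = "{}" and f = "\<lambda>_ X. (-1::int) ^ card X"]
      by simp
  qed
  also have "\<dots> = (\<Sum>d | d \<in> root_edges \<and> G \<inter> branch E A d = {}.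
      \<Prod>e\<in>root_edges - {d}. \<Sum>X\<in>branch_choices G e. (-1::int) ^ card X)"
    using finite_root_edges by (simp add: sum.inter_filter)
  finally show ?thesis .
qed

text \<open>The coefficient c_G is, up to sign, the alternating sum of births over supersets of G:
  the branches met by G contribute the factors z(Gamma_e, G \<inter> E(Gamma_e), A), and the sum over
  the branch d in which the glued subtree is empty produces the elementary symmetric functions.\<close>
lemma sum_alternating_births:
  assumes G: "G \<subseteq> E"
  shows "(\<Sum>H | G \<subseteq> H \<and> H \<subseteq> E. (-1) ^ card H * births H) = (-1) ^ card G * coeff E A G"
proof -
  define a where "a e = (\<Sum>X\<in>branch_choices G e. (-1::int) ^ card X)" for e
  define z where "z e = zz (branch E A e) {} A" for e
  define K where "K = {e \<in> root_edges. G \<inter> branch E A e \<noteq> {}}"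
  define R where "R = root_edges - K"
  have fin: "finite K" "finite R" using finite_root_edges by (auto simp: K_def R_def)
  have R_eq: "{d. d \<in> root_edges \<and> G \<inter> branch E A d = {}} = R" by (auto simp: K_def R_def)
  have "(\<Sum>H | G \<subseteq> H \<and> H \<subseteq> E. (-1) ^ card H * births H) = (\<Sum>d\<in>R. \<Prod>e\<in>root_edges - {d}. a e)"
    unfolding sum_alternating_births_eq_sum_branch_choices[OF G] R_eq a_def ..
  also have "\<dots> = (\<Sum>d\<in>R. (\<Prod>e\<in>K. a e) * (\<Prod>e\<in>R - {d}. 1 + z e))"
  proof (rule sum.cong[OF refl])
    fix d assume d: "d \<in> R"
    have "root_edges - {d} = K \<union> (R - {d})" "K \<inter> (R - {d}) = {}"
      using d by (auto simp: K_def R_def)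
    moreover have "(\<Prod>e\<in>R - {d}. a e) = (\<Prod>e\<in>R - {d}. 1 + z e)"
      using sum_branch_choices_avoiding by (intro prod.cong) (auto simp: a_def z_def R_def K_def)
    ultimately show "(\<Prod>e\<in>root_edges - {d}. a e) = (\<Prod>e\<in>K. a e) * (\<Prod>e\<in>R - {d}. 1 + z e)"
      using fin by (simp add: prod.union_disjoint)
  qed
  also have "\<dots> = (\<Prod>e\<in>K. a e) * (\<Sum>j\<in>{0..<card R}. int (card R - j) * esym j z R)"
    by (simp add: sum_distrib_left[symmetric] sum_prod_Diff_one_plus[OF fin(2)])
  also have "(\<Prod>e\<in>K. a e) = (-1) ^ card G * (\<Prod>e\<in>K. zz (branch E A e) (G \<inter> branch E A e) A)"
  proof -
    have "(-1::int) ^ card G = (\<Prod>e\<in>root_edges. (-1) ^ card (G \<inter> branch E A e))"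
      unfolding card_eq_sum_card_Int_branch[OF G] by (rule power_sum)
    also have "\<dots> = (\<Prod>e\<in>K. (-1) ^ card (G \<inter> branch E A e))"
      using finite_root_edges by (intro prod.mono_neutral_right) (auto simp: K_def)
    finally show ?thesis
      using sum_branch_choices_meeting by (simp add: a_def K_def prod.distrib)
  qed
  also have "card R = card root_edges - card K"
    unfolding R_def using fin by (intro card_Diff_subset) (auto simp: K_def)
  finally show ?thesis
    unfolding coeff_def Let_def K_def[symmetric] R_def[symmetric] z_def[symmetric]
    by (simp add: mult.assoc)
qed

lemma sum_coeff_supersets:
  assumes "H \<subseteq> E"
  shows "(\<Sum>G\<in>{G \<in> Pow E. H \<subseteq> G}. coeff E A G) = births H"
proof -
  have "coeff E A G = (-1) ^ card G * (\<Sum>K | G \<subseteq> K \<and> K \<subseteq> E. (-1) ^ card K * births K)"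
    if "G \<subseteq> E" for G
  proof -
    have "(-1::int) ^ card G * (-1) ^ card G = 1" by (simp flip: power_mult_distrib)
    then show ?thesis unfolding sum_alternating_births[OF that] mult.assoc[symmetric] by simp
  qed
  moreover have "{G \<in> Pow E. H \<subseteq> G} = {G. H \<subseteq> G \<and> G \<subseteq> E}" by auto
  ultimately have "(\<Sum>G\<in>{G \<in> Pow E. H \<subseteq> G}. coeff E A G)
      = (\<Sum>G | H \<subseteq> G \<and> G \<subseteq> E. (-1) ^ card G * (\<Sum>K | G \<subseteq> K \<and> K \<subseteq> E. (-1) ^ card K * births K))"
    by (intro sum.cong) auto
  also have "\<dots> = births H" by (rule sum_supersets_alternating_inversion[OF finite_E assms])
  finally show ?thesis .
qed

end

section \<open>The dynamics with rationally independent times\<close>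

locale timed_tree = rooted_tree V E A for V :: "'v set" and E A +
  fixes t :: "'v set \<Rightarrow> real"
  assumes times_pos: "\<forall>e\<in>E. t e > 0" and times_indep: "lin_indep_Q E t"
begin

lemma traversal_time_eq_imp_eq:
  assumes "traversal_time t c = traversal_time t c'" "e \<in> E"
  shows "c e = c' e"
proof -
  define q where "q x = (of_nat (c x) - of_nat (c' x) :: rat)" for x
  have "(\<Sum>x\<in>E. of_rat (q x) * t x) = traversal_time t c - traversal_time t c'"
    unfolding traversal_time_def sum_subtractf[symmetric]
    by (rule sum.cong) (auto simp: q_def of_rat_diff left_diff_distrib)
  then have "q e = 0" using assms times_indep unfolding lin_indep_Q_def by simp
  then show ?thesis by (simp add: q_def)
qed

text \<open>The moment at which a point is back at A after traversing each edge e exactly 2 m e times.\<close>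
definition return_time :: "('v set \<Rightarrow> nat) \<Rightarrow> real" where
  "return_time m = (\<Sum>e\<in>E. 2 * real (m e) * t e)"

lemma return_time_eq: "return_time m = traversal_time t (\<lambda>e. 2 * m e)"
  unfolding return_time_def traversal_time_def by (rule sum.cong) auto

definition lattice_points :: "real \<Rightarrow> ('v set \<Rightarrow> nat) set" where
  "lattice_points T = {m \<in> E \<rightarrow>\<^sub>E (UNIV :: nat set). return_time m \<le> T}"

lemma finite_lattice_points: "finite (lattice_points T)"
proof -
  have "lattice_points T \<subseteq> PiE E (\<lambda>e. {0..nat \<lceil>T / (2 * t e)\<rceil>})"
  proof
    fix m assume m: "m \<in> lattice_points T"
    have "m e \<le> nat \<lceil>T / (2 * t e)\<rceil>" if e: "e \<in> E" for e
    proof -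
      have "\<forall>x\<in>E. 0 \<le> 2 * real (m x) * t x" using times_pos by auto
      then have "2 * real (m e) * t e \<le> return_time m"
        unfolding return_time_def using finite_E e by (intro member_le_sum) auto
      also have "\<dots> \<le> T" using m by (simp add: lattice_points_def)
      finally have "real (m e) \<le> T / (2 * t e)"
        using times_pos e by (simp add: pos_le_divide_eq algebra_simps)
      also have "\<dots> \<le> real (nat \<lceil>T / (2 * t e)\<rceil>)" by (rule real_nat_ceiling_ge)
      finally show ?thesis by simp
    qed
    then show "m \<in> PiE E (\<lambda>e. {0..nat \<lceil>T / (2 * t e)\<rceil>})"
      using m by (auto simp: lattice_points_def PiE_def Pi_def)
  qed
  then show ?thesis using finite_E by (rule finite_subset[OF _ finite_PiE]) simp
qed

lemma inj_on_return_time: "inj_on return_time (E \<rightarrow>\<^sub>E (UNIV :: nat set))"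
proof (rule inj_onI)
  fix m m' assume "m \<in> E \<rightarrow>\<^sub>E (UNIV :: nat set)" "m' \<in> E \<rightarrow>\<^sub>E (UNIV :: nat set)"
    and "return_time m = return_time m'"
  then show "m = m'"
    using traversal_time_eq_imp_eq[of "\<lambda>e. 2 * m e" "\<lambda>e. 2 * m' e"]
    by (intro PiE_ext) (auto simp: return_time_eq)
qed

lemma root_edge_exists:
  assumes "E \<noteq> {}"
  obtains x where "{A, x} \<in> E"
proof -
  obtain g v where g: "g \<in> E" "v \<in> g" using assms empty_not_edge by (metis all_not_in_conv)
  have "A \<in> \<Union>E"
  proof (cases "v = A")
    case False
    have "v \<in> V" using g edges_subset_Pow by auto
    then show ?thesis using rtrancl_adj_in_Union[OF reachable_from_root] False by blast
  qed (use g in blast)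
  then obtain g' where "g' \<in> E" "A \<in> g'" by blast
  then show ?thesis using that edge_at by metis
qed

text \<open>Points leave A exactly when the process returns there along a closed walk, whose edge
  counts are even.\<close>
lemma departure_times_root:
  assumes "E \<noteq> {}"
  shows "{s \<in> dep_times E t A A. s \<le> T} = return_time ` {m \<in> lattice_points T. admissible (support m)}"
proof (intro equalityI subsetI)
  fix s assume s: "s \<in> {s \<in> dep_times E t A A. s \<le> T}"
  then obtain w where "(A, w, s) \<in> deps E t A" by (auto simp: dep_times_def)
  then obtain c where wc: "walk_counts A c" and sc: "s = traversal_time t c"
    using deps_imp_walk_counts by blast
  have ev: "even (c e)" if "e \<in> E" for e using walk_counts_parity[OF wc that] root_in_root_side by simp
  define m where "m = restrict (\<lambda>e. c e div 2) E"
  have cm: "c e = 2 * m e" if "e \<in> E" for e using ev[OF that] that by (simp add: m_def)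
  have "return_time m = s"
    unfolding sc return_time_eq traversal_time_def using cm by (intro sum.cong) auto
  moreover have "support m = support c" using cm by (auto simp: support_def)
  moreover have "admissible (support c)" using wc by (simp add: walk_counts_def)
  ultimately show "s \<in> return_time ` {m \<in> lattice_points T. admissible (support m)}"
    using s by (auto simp: lattice_points_def m_def)
next
  fix s assume "s \<in> return_time ` {m \<in> lattice_points T. admissible (support m)}"
  then obtain m where m: "m \<in> lattice_points T" "admissible (support m)" and s: "s = return_time m"
    by blast
  obtain x where x: "{A, x} \<in> E" using root_edge_exists[OF assms] by blast
  have "support (\<lambda>e. 2 * m e) = support m" by (simp add: support_def)
  then have "walk_counts A (\<lambda>e. 2 * m e)"
    using m(2) root_in_root_side by (auto simp: walk_counts_def)
  from walk_counts_imp_deps[OF this x] have "(A, x, return_time m) \<in> deps E t A"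
    by (simp add: return_time_eq)
  then show "s \<in> {s \<in> dep_times E t A A. s \<le> T}"
    using m s by (auto simp: dep_times_def lattice_points_def)
qed

lemma arrival_at_return_time_iff:
  assumes "admissible (support m)"
  shows "(u, A, return_time m - t {u, A}) \<in> deps E t A \<longleftrightarrow> {u, A} \<in> E \<and> m {u, A} \<noteq> 0"
proof
  assume "(u, A, return_time m - t {u, A}) \<in> deps E t A"
  from deps_imp_walk_counts[OF this] obtain c where g: "{u, A} \<in> E"
    and sc: "return_time m - t {u, A} = traversal_time t c" by blast
  have "traversal_time t (c({u, A} := Suc (c {u, A}))) = traversal_time t (\<lambda>e. 2 * m e)"
    using traversal_time_upd[OF g] sc by (simp add: return_time_eq)
  from traversal_time_eq_imp_eq[OF this g] have "Suc (c {u, A}) = 2 * m {u, A}" by simp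
  then show "{u, A} \<in> E \<and> m {u, A} \<noteq> 0" using g by auto
next
  assume "{u, A} \<in> E \<and> m {u, A} \<noteq> 0"
  then have gE: "{A, u} \<in> E" and mg: "m {A, u} \<noteq> 0" by (simp_all add: insert_commute)
  define c where "c = (\<lambda>e. 2 * m e)({A, u} := 2 * m {A, u} - 1)"
  have "walk_counts A (\<lambda>e. 2 * m e)"
    using assms root_in_root_side by (auto simp: walk_counts_def support_def)
  moreover have "{A, u} \<in> support (\<lambda>e. 2 * m e)" using gE mg by (simp add: support_def)
  moreover have "2 * m {A, u} \<ge> 2" using mg by simp
  ultimately have "walk_counts u c"
    using walk_counts_retract_multiple[of A "\<lambda>e. 2 * m e" u] by (simp add: c_def)
  from walk_counts_imp_deps[OF this] gE have "(u, A, traversal_time t c) \<in> deps E t A"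
    by (simp add: insert_commute)
  moreover have "traversal_time t c = return_time m - t {u, A}"
    using traversal_time_upd[OF gE, of t "\<lambda>e. 2 * m e" "2 * m {A, u} - 1"] mg
    by (simp add: c_def return_time_eq of_nat_diff algebra_simps insert_commute)
  ultimately show "(u, A, return_time m - t {u, A}) \<in> deps E t A" by simp
qed

lemma arrivals_root:
  assumes "admissible (support m)"
  shows "arrivals E t A A (return_time m) = card (root_edges \<inter> support m)"
proof -
  define U where "U = {u. (u, A, return_time m - t {u, A}) \<in> deps E t A}"
  have U: "U = {u. {u, A} \<in> E \<and> m {u, A} \<noteq> 0}"
    unfolding U_def using arrival_at_return_time_iff[OF assms] by blast
  have "inj_on (\<lambda>u. {u, A}) U" by (rule inj_onI) (auto simp: doubleton_eq_iff U edge_ends_distinct)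
  moreover have "(\<lambda>u. {u, A}) ` U = root_edges \<inter> support m"
  proof (intro equalityI subsetI)
    fix e assume e: "e \<in> root_edges \<inter> support m"
    then have "e = {far_end e, A}" using root_edge_far_end(1) by (simp add: insert_commute)
    then show "e \<in> (\<lambda>u. {u, A}) ` U" using U e by (auto simp: support_def intro!: image_eqI)
  qed (auto simp: U support_def incident_def)
  ultimately show ?thesis unfolding arrivals_def U_def[symmetric] by (metis card_image)
qed

lemma NN_root_eq: "NN E t A A T = (\<Sum>m\<in>lattice_points T. births (support m))"
proof (cases "E = {}")
  case True
  then have "dep_times E t A A = {}" using deps_imp_walk_counts by (auto simp: dep_times_def)
  moreover have "births H = 0" for H unfolding births_def using True by (simp add: incident_def)
  ultimately show ?thesis by (simp add: NN_def)
next
  case False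
  have "NN E t A A T = (\<Sum>m | m \<in> lattice_points T \<and> admissible (support m).
      int (card root_edges) - int (arrivals E t A A (return_time m)))"
    unfolding NN_def departure_times_root[OF False]
    by (rule sum.reindex[unfolded comp_def], rule inj_on_subset[OF inj_on_return_time])
       (auto simp: lattice_points_def)
  also have "\<dots> = (\<Sum>m | m \<in> lattice_points T \<and> admissible (support m). births (support m))"
  proof (rule sum.cong[OF refl])
    fix m assume "m \<in> {m. m \<in> lattice_points T \<and> admissible (support m)}"
    moreover have "card (root_edges - support m) = card root_edges - card (root_edges \<inter> support m)"
      using finite_root_edges by (simp add: card_Diff_subset_Int)
    moreover have "card (root_edges \<inter> support m) \<le> card root_edges"
      using finite_root_edges by (simp add: card_mono)
    ultimately show "int (card root_edges) - int (arrivals E t A A (return_time m)) = births (support m)"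
      using arrivals_root by (simp add: births_def of_nat_diff)
  qed
  also have "\<dots> = (\<Sum>m\<in>lattice_points T. births (support m))"
    using finite_lattice_points by (intro sum.mono_neutral_left) (auto simp: births_def)
  finally show ?thesis .
qed

lemma lattice_count_eq:
  assumes G: "G \<subseteq> E"
  shows "lattice_count t G T = card {m \<in> lattice_points T. support m \<subseteq> G}"
proof -
  let ?M = "{m \<in> lattice_points T. support m \<subseteq> G}"
  have return_time_G: "return_time m = (\<Sum>e\<in>G. 2 * real (m e) * t e)" if "support m \<subseteq> G" for m
    unfolding return_time_def using that G finite_E
    by (intro sum.mono_neutral_right) (auto simp: support_def)
  have inj: "inj_on (\<lambda>m. restrict m G) ?M"
  proof (rule inj_onI)
    fix m m' assume m: "m \<in> ?M" and m': "m' \<in> ?M" and eq: "restrict m G = restrict m' G"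
    show "m = m'"
    proof (rule PiE_ext)
      show "m \<in> E \<rightarrow>\<^sub>E (UNIV :: nat set)" "m' \<in> E \<rightarrow>\<^sub>E (UNIV :: nat set)"
        using m m' by (auto simp: lattice_points_def)
      fix e assume "e \<in> E"
      show "m e = m' e"
      proof (cases "e \<in> G")
        case True
        then show ?thesis using eq by (metis restrict_apply')
      next
        case False
        then have "e \<notin> support m" "e \<notin> support m'" using m m' by blast+
        then show ?thesis using \<open>e \<in> E\<close> by (simp add: support_def)
      qed
    qed
  qed
  have image: "(\<lambda>m. restrict m G) ` ?M
      = {f \<in> G \<rightarrow>\<^sub>E (UNIV :: nat set). (\<Sum>e\<in>G. 2 * real (f e) * t e) \<le> T}"
  proof (intro equalityI subsetI)
    fix f assume "f \<in> (\<lambda>m. restrict m G) ` ?M"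
    then show "f \<in> {f \<in> G \<rightarrow>\<^sub>E (UNIV :: nat set). (\<Sum>e\<in>G. 2 * real (f e) * t e) \<le> T}"
      using return_time_G by (auto simp: lattice_points_def)
  next
    fix f assume f: "f \<in> {f \<in> G \<rightarrow>\<^sub>E (UNIV :: nat set). (\<Sum>e\<in>G. 2 * real (f e) * t e) \<le> T}"
    define m where "m e = (if e \<in> G then f e else if e \<in> E then 0 else undefined)" for e
    have "support m \<subseteq> G" by (auto simp: support_def m_def)
    moreover have "m \<in> E \<rightarrow>\<^sub>E (UNIV :: nat set)" using G by (auto simp: m_def PiE_def extensional_def)
    moreover have "return_time m \<le> T" using return_time_G[OF \<open>support m \<subseteq> G\<close>] f by (simp add: m_def)
    moreover have "restrict m G = f" using f by (auto simp: m_def restrict_def PiE_def extensional_def)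
    ultimately show "f \<in> (\<lambda>m. restrict m G) ` ?M" by (auto simp: lattice_points_def)
  qed
  show ?thesis unfolding lattice_count_def image[symmetric] by (rule card_image[OF inj])
qed

end

theorem theorem1:
  fixes V :: "'v set" and E :: "'v set set" and t :: "'v set \<Rightarrow> real"
    and A :: 'v and T :: real
  assumes "is_tree V E"
    and "\<forall>e\<in>E. t e > 0"
    and "lin_indep_Q E t"
    and "A \<in> V"
    and "T \<ge> 0"
  shows "NN E t A A T = (\<Sum>G\<in>Pow E. coeff E A G * int (lattice_count t G T))"
proof -
  interpret timed_tree V E A t using assms by unfold_locales auto
  have "NN E t A A T = (\<Sum>m\<in>lattice_points T. births (support m))"
    by (rule NN_root_eq)
  also have "\<dots> = (\<Sum>m\<in>lattice_points T. \<Sum>G\<in>{G \<in> Pow E. support m \<subseteq> G}. coeff E A G)"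
    by (intro sum.cong refl sum_coeff_supersets[symmetric] support_subset)
  also have "\<dots> = (\<Sum>G\<in>Pow E. \<Sum>m\<in>{m \<in> lattice_points T. support m \<subseteq> G}. coeff E A G)"
    using finite_lattice_points finite_E by (intro sum.swap_restrict) auto
  also have "\<dots> = (\<Sum>G\<in>Pow E. coeff E A G * int (lattice_count t G T))"
    using lattice_count_eq by (intro sum.cong) auto
  finally show ?thesis .
qed

end
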